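(* Let $c>0$ and let $h$ additionally satisfy $h(y)>-1$ for $y\in(-\pi,\pi)$. For $\vartheta\in(-1,1)$ and $y\in(-\pi,\pi]$ let $u(x,t;\vartheta,y)$ be the entire solution of $\partial_t u=\partial_{xx}u-c\partial_x u$ ($x>0$), $\partial_x u=1+\vartheta h(u)$ ($x=0$), which is relative periodic ($u(\cdot,t+T)=u(\cdot,t)-2\pi$ for a minimal $T=T(\vartheta)>0$), satisfies $\partial_x u>0$, $\partial_t u<0$, and is normalized by $u(0,0;\vartheta,y)=y$. Then for every fixed $y\in(-\pi,\pi]$ and all $M>0$, $\tau>0$, the family $\{u(\cdot,\cdot;\vartheta,y):\vartheta\in(-1,1)\}$ is uniformly bounded in $L^\infty([0,M]\times[-\tau,\tau])$.
   Context: $h\in C^2(\mathbb{R},\mathbb{R})$ is $2\pi$-periodic with $\max h=1$, $\min h=h(\pi)=-1$. Entire solutions are classical solutions for all $t\in\mathbb{R}$ with $e^{-cx/2}u(\cdot,t)$ bounded and uniformly continuous on $[0,\infty)$. For each $\vartheta\in(-1,1)$ such relative periodic monotone solutions exist and are unique up to time translation among entire solutions with $\partial_t u<0$, so the normalization is well defined. *)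

theory Defs
  imports "HOL-Analysis.Analysis"
begin

definition C2_real :: "(real \<Rightarrow> real) \<Rightarrow> bool" where
  "C2_real h \<longleftrightarrow> (\<exists>h1 h2. (\<forall>y. (h has_real_derivative h1 y) (at y)) \<and>
      (\<forall>y. (h1 has_real_derivative h2 y) (at y)) \<and> continuous_on UNIV h2)"

definition admissible_h :: "(real \<Rightarrow> real) \<Rightarrow> bool" where
  "admissible_h h \<longleftrightarrow> C2_real h \<and> (\<forall>y. h (y + 2 * pi) = h y) \<and>
     (\<forall>y. h y \<le> 1) \<and> (\<exists>y. h y = 1) \<and> (\<forall>y. -1 \<le> h y) \<and> h pi = -1"

definition rel_periodic_monotone_solution ::
    "real \<Rightarrow> (real \<Rightarrow> real) \<Rightarrow> real \<Rightarrow> (real \<Rightarrow> real \<Rightarrow> real) \<Rightarrow> bool" where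
  "rel_periodic_monotone_solution c h \<theta> u \<longleftrightarrow>
    (\<exists>ux uxx ut.
      continuous_on ({0..} \<times> UNIV) (\<lambda>(x, t). u x t) \<and>
      continuous_on ({0..} \<times> UNIV) (\<lambda>(x, t). ux x t) \<and>
      continuous_on ({0<..} \<times> UNIV) (\<lambda>(x, t). uxx x t) \<and>
      continuous_on ({0<..} \<times> UNIV) (\<lambda>(x, t). ut x t) \<and>
      (\<forall>x\<ge>0. \<forall>t. ((\<lambda>s. u s t) has_real_derivative ux x t) (at x within {0..})) \<and>
      (\<forall>x>0. \<forall>t. ((\<lambda>s. ux s t) has_real_derivative uxx x t) (at x)) \<and>
      (\<forall>x>0. \<forall>t. ((\<lambda>s. u x s) has_real_derivative ut x t) (at t)) \<and>
      (\<forall>x>0. \<forall>t. ut x t = uxx x t - c * ux x t) \<and>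
      (\<forall>t. ux 0 t = 1 + \<theta> * h (u 0 t)) \<and>
      (\<forall>t. bounded ((\<lambda>x. exp (- c * x / 2) * u x t) ` {0..}) \<and>
           uniformly_continuous_on {0..} (\<lambda>x. exp (- c * x / 2) * u x t)) \<and>
      (\<forall>x\<ge>0. \<forall>t. ux x t > 0) \<and>
      (\<forall>x>0. \<forall>t. ut x t < 0) \<and>
      (\<exists>T>0. (\<forall>x\<ge>0. \<forall>t. u x (t + T) = u x t - 2 * pi) \<and>
         (\<forall>T'. 0 < T' \<and> T' < T \<longrightarrow> \<not> (\<forall>x\<ge>0. \<forall>t. u x (t + T') = u x t - 2 * pi))))"

end

theory Submission
  imports Defs
begin

text \<open>Integrate the equation over one period T. Since u drops by 2\<pi> per period,
  F(x) = \<integral> u_x(x,t) dt over [0,T] satisfies F' = c F - 2\<pi>, so F(x) = 2\<pi>/c + k exp(c x),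
  and F \<ge> 0 forces k \<ge> 0. Hence F(x) \<le> F(0) exp(c x) and F(0) \<ge> 2\<pi>/c, while the
  boundary condition and |\<theta> h| < 1 give F(0) \<le> 2T; in particular T \<ge> \<pi>/c. Integrating F
  in x bounds the period mean of u(M,.), hence u(M,0), independently of \<theta>. Monotonicity in
  x and t and relative periodicity, with at most c\<tau>/\<pi> + 1 periods in [0,\<tau>], carry the
  bounds at (0,0) and (M,0) over to [0,M] \<times> [-\<tau>,\<tau>].\<close>

lemma continuous_on_slice_fst:
  assumes "continuous_on (S \<times> T) (\<lambda>(x, t). F x t)" "x \<in> S"
  shows "continuous_on T (F x)"
  by (rule continuous_on_compose2[OF assms(1), of _ "Pair x", simplified])
    (use assms(2) in \<open>auto intro: continuous_intros\<close>)

lemma continuous_on_slice_snd: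
  assumes "continuous_on (S \<times> T) (\<lambda>(x, t). F x t)" "t \<in> T"
  shows "continuous_on S (\<lambda>x. F x t)"
  by (rule continuous_on_compose2[OF assms(1), of _ "\<lambda>x. (x, t)", simplified])
    (use assms(2) in \<open>auto intro: continuous_intros\<close>)

lemma DERIV_le_imp_increment_le:
  fixes f f' :: "real \<Rightarrow> real"
  assumes "a \<le> b" "continuous_on {a..b} f"
    and "\<And>x. a < x \<Longrightarrow> x < b \<Longrightarrow> (f has_real_derivative f' x) (at x)"
    and "\<And>x. a < x \<Longrightarrow> x < b \<Longrightarrow> f' x \<le> K"
  shows "f b - f a \<le> K * (b - a)"
proof -
  have "K * a - f a \<le> K * b - f b"
  proof (rule DERIV_nonneg_imp_increasing_open[OF assms(1)])
    fix x assume "a < x" "x < b"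
    then show "\<exists>y. ((\<lambda>x. K * x - f x) has_real_derivative y) (at x) \<and> 0 \<le> y"
      using assms(3,4) by (auto intro!: exI[of _ "K - f' x"] derivative_eq_intros)
  qed (use assms(2) in \<open>auto intro!: continuous_intros\<close>)
  then show ?thesis by (simp add: algebra_simps)
qed

lemma has_real_derivative_integral_param:
  fixes f f' :: "real \<Rightarrow> real \<Rightarrow> real"
  assumes "open S" "convex S" "x \<in> S"
    and "\<And>x t. x \<in> S \<Longrightarrow> ((\<lambda>x. f x t) has_real_derivative f' x t) (at x)"
    and "\<And>x. x \<in> S \<Longrightarrow> f x integrable_on {a..b}"
    and "continuous_on (S \<times> {a..b}) (\<lambda>(x, t). f' x t)"
  shows "((\<lambda>x. integral {a..b} (f x)) has_real_derivative integral {a..b} (f' x)) (at x)"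
proof -
  have "((\<lambda>x. integral (cbox a b) (f x)) has_field_derivative integral (cbox a b) (f' x))
      (at x within S)"
    by (rule leibniz_rule_field_derivative)
      (use assms in \<open>auto intro: has_field_derivative_at_within\<close>)
  then show ?thesis using at_within_open[OF assms(3,1)] by simp
qed

lemma linear_ODE_solution:
  fixes f :: "real \<Rightarrow> real"
  assumes "c \<noteq> 0" "continuous_on {0..} f"
    and "\<And>x. x > 0 \<Longrightarrow> (f has_real_derivative c * f x - a) (at x)"
    and "x \<ge> 0"
  shows "f x = a / c + (f 0 - a / c) * exp (c * x)"
proof -
  define g where "g s = exp (- c * s) * (f s - a / c)" for s
  have "g x = g 0"
  proof (rule DERIV_isconst2[of 0 "x + 1"])
    show "continuous_on {0..x + 1} g"
      unfolding g_def by (intro continuous_intros continuous_on_subset[OF assms(2)]) auto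
    fix s :: real assume "0 < s" "s < x + 1"
    then have "(g has_real_derivative
        - c * exp (- c * s) * (f s - a / c) + exp (- c * s) * (c * f s - a)) (at s)"
      unfolding g_def by (auto intro!: derivative_eq_intros assms(3))
    then show "(g has_real_derivative 0) (at s)"
      using assms(1) by (simp add: field_simps)
  qed (use assms(4) in auto)
  have "f x - a / c = exp (c * x) * g x"
    by (simp add: g_def mult.assoc[symmetric] exp_add[symmetric])
  also have "\<dots> = (f 0 - a / c) * exp (c * x)"
    using \<open>g x = g 0\<close> by (simp add: g_def)
  finally show ?thesis by simp
qed

lemma exp_coeff_nonneg:
  fixes a c k :: real
  assumes "c > 0" and nonneg: "\<And>x. x \<ge> 0 \<Longrightarrow> 0 \<le> a + k * exp (c * x)"
  shows "k \<ge> 0"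
proof (rule ccontr)
  assume "\<not> k \<ge> 0"
  then have k: "k < 0" by simp
  define x where "x = ln (\<bar>a\<bar> / (- k) + 1) / c"
  have q: "\<bar>a\<bar> / (- k) \<ge> 0" using k by (intro divide_nonneg_pos) auto
  then have "x \<ge> 0" using assms(1) by (simp add: x_def)
  moreover have "exp (c * x) = \<bar>a\<bar> / (- k) + 1"
    using assms(1) q by (simp add: x_def add_pos_nonneg)
  then have "a + k * exp (c * x) = a - \<bar>a\<bar> + k"
    using k by (simp add: field_simps)
  ultimately show False using nonneg[of x] k by linarith
qed

locale monotone_rel_periodic_solution =
  fixes c \<theta> :: real and h :: "real \<Rightarrow> real" and u ux uxx ut :: "real \<Rightarrow> real \<Rightarrow> real"
    and T :: real
  assumes c_pos: "0 < c"
    and theta_bound: "\<bar>\<theta>\<bar> < 1"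
    and h_bound: "\<And>z. \<bar>h z\<bar> \<le> 1"
    and u_cont: "continuous_on ({0..} \<times> UNIV) (\<lambda>(x, t). u x t)"
    and ux_cont: "continuous_on ({0..} \<times> UNIV) (\<lambda>(x, t). ux x t)"
    and uxx_cont: "continuous_on ({0<..} \<times> UNIV) (\<lambda>(x, t). uxx x t)"
    and u_dx: "\<And>x t. x \<ge> 0 \<Longrightarrow> ((\<lambda>s. u s t) has_real_derivative ux x t) (at x within {0..})"
    and ux_dx: "\<And>x t. x > 0 \<Longrightarrow> ((\<lambda>s. ux s t) has_real_derivative uxx x t) (at x)"
    and u_dt: "\<And>x t. x > 0 \<Longrightarrow> ((\<lambda>s. u x s) has_real_derivative ut x t) (at t)"
    and heat_eq: "\<And>x t. x > 0 \<Longrightarrow> ut x t = uxx x t - c * ux x t"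
    and boundary_eq: "\<And>t. ux 0 t = 1 + \<theta> * h (u 0 t)"
    and ux_pos: "\<And>x t. x \<ge> 0 \<Longrightarrow> ux x t > 0"
    and ut_neg: "\<And>x t. x > 0 \<Longrightarrow> ut x t < 0"
    and period_pos: "T > 0"
    and rel_periodic: "\<And>x t. x \<ge> 0 \<Longrightarrow> u x (t + T) = u x t - 2 * pi"
begin

lemma continuous_on_u_time: "x \<ge> 0 \<Longrightarrow> continuous_on A (u x)"
  by (metis continuous_on_slice_fst[OF u_cont] atLeast_iff continuous_on_subset subset_UNIV)

lemma continuous_on_ux_time: "x \<ge> 0 \<Longrightarrow> continuous_on A (ux x)"
  by (metis continuous_on_slice_fst[OF ux_cont] atLeast_iff continuous_on_subset subset_UNIV)

lemma continuous_on_u_space: "continuous_on {0..} (\<lambda>x. u x t)"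
  using continuous_on_slice_snd[OF u_cont] by simp

lemma u_dx_interior:
  assumes "x > 0" shows "((\<lambda>s. u s t) has_real_derivative ux x t) (at x)"
proof -
  have "((\<lambda>s. u s t) has_real_derivative ux x t) (at x within {0<..})"
    by (rule DERIV_subset[OF u_dx]) (use assms in auto)
  then show ?thesis using at_within_open[of x "{0<..}"] assms by simp
qed

lemma u_antimono_time_interior: "x > 0 \<Longrightarrow> s \<le> t \<Longrightarrow> u x t \<le> u x s"
  by (rule DERIV_nonpos_imp_nonincreasing)
    (auto intro!: exI[of _ "ut x _"] u_dt less_imp_le ut_neg)

lemma u_antimono_time: "x \<ge> 0 \<Longrightarrow> s \<le> t \<Longrightarrow> u x t \<le> u x s"
proof -
  assume "x \<ge> 0" "s \<le> t"
  have "0 \<le> u x s - u x t"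
  proof (rule continuous_ge_on_closure[of "{0<..}" "\<lambda>x. u x s - u x t"])
    show "continuous_on (closure {0<..}) (\<lambda>x. u x s - u x t)"
      by (auto intro!: continuous_intros continuous_on_u_space)
  qed (use \<open>x \<ge> 0\<close> \<open>s \<le> t\<close> u_antimono_time_interior in auto)
  then show ?thesis by simp
qed

lemma u_mono_space:
  assumes "0 \<le> a" "a \<le> b" shows "u a t \<le> u b t"
proof (rule DERIV_nonneg_imp_increasing_open[OF assms(2)])
  show "continuous_on {a..b} (\<lambda>x. u x t)"
    using assms(1) by (auto intro: continuous_on_subset[OF continuous_on_u_space])
  fix x assume "a < x" "x < b"
  with assms(1) show "\<exists>y. ((\<lambda>x. u x t) has_real_derivative y) (at x) \<and> 0 \<le> y"
    by (intro exI[of _ "ux x t"] conjI u_dx_interior less_imp_le ux_pos) auto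
qed

lemma u_shift_periods: "x \<ge> 0 \<Longrightarrow> u x (t + real n * T) = u x t - 2 * pi * real n"
proof (induction n)
  case (Suc n)
  have "u x (t + real (Suc n) * T) = u x ((t + real n * T) + T)"
    by (simp add: algebra_simps)
  also have "\<dots> = u x (t + real n * T) - 2 * pi"
    using rel_periodic Suc.prems by blast
  finally show ?case using Suc by (simp add: algebra_simps)
qed simp

definition ux_integral :: "real \<Rightarrow> real" where
  "ux_integral x = integral {0..T} (ux x)"

definition u_integral :: "real \<Rightarrow> real" where
  "u_integral x = integral {0..T} (u x)"

lemma continuous_on_ux_integral: "continuous_on {0..} ux_integral"
proof -
  have "continuous_on {0..} (\<lambda>x. integral (cbox 0 T) (ux x))"
    by (rule integral_continuous_on_param, rule continuous_on_subset[OF ux_cont]) auto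
  then show ?thesis by (simp add: ux_integral_def)
qed

lemma continuous_on_u_integral: "continuous_on {0..} u_integral"
proof -
  have "continuous_on {0..} (\<lambda>x. integral (cbox 0 T) (u x))"
    by (rule integral_continuous_on_param, rule continuous_on_subset[OF u_cont]) auto
  then show ?thesis by (simp add: u_integral_def)
qed

lemma ut_has_integral_period: "x > 0 \<Longrightarrow> (ut x has_integral - 2 * pi) {0..T}"
  using fundamental_theorem_of_calculus[of 0 T "u x" "ut x"] period_pos
    rel_periodic[of x 0] u_dt[of x]
  by (auto simp: has_real_derivative_iff_has_vector_derivative[symmetric]
      intro: has_field_derivative_at_within)

lemma uxx_has_integral_period:
  assumes "x > 0" shows "(uxx x has_integral c * ux_integral x - 2 * pi) {0..T}"
proof -
  have "(ux x has_integral ux_integral x) {0..T}"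
    unfolding ux_integral_def using assms
    by (intro integrable_integral integrable_continuous_real continuous_on_ux_time) auto
  then have "((\<lambda>t. ut x t + c * ux x t) has_integral - 2 * pi + c * ux_integral x) {0..T}"
    by (intro has_integral_add ut_has_integral_period assms has_integral_mult_right)
  then show ?thesis using heat_eq[OF assms] by simp
qed

lemma ux_integral_has_derivative:
  assumes "x > 0" shows "(ux_integral has_real_derivative c * ux_integral x - 2 * pi) (at x)"
proof -
  have "(ux_integral has_real_derivative integral {0..T} (uxx x)) (at x)"
    unfolding ux_integral_def
    by (rule has_real_derivative_integral_param[of "{0<..}"])
      (use assms in \<open>auto intro!: ux_dx integrable_continuous_real continuous_on_ux_time
        intro: continuous_on_subset[OF uxx_cont]\<close>)
  then show ?thesis using uxx_has_integral_period[OF assms] by (simp add: integral_unique)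
qed

lemma u_integral_has_derivative:
  assumes "x > 0" shows "(u_integral has_real_derivative ux_integral x) (at x)"
  unfolding u_integral_def ux_integral_def
  by (rule has_real_derivative_integral_param[of "{0<..}"])
    (use assms in \<open>auto intro!: u_dx_interior integrable_continuous_real continuous_on_u_time
      intro: continuous_on_subset[OF ux_cont]\<close>)

lemma ux_integral_eq:
  "x \<ge> 0 \<Longrightarrow> ux_integral x = 2 * pi / c + (ux_integral 0 - 2 * pi / c) * exp (c * x)"
  by (rule linear_ODE_solution)
    (use c_pos in \<open>auto intro: continuous_on_ux_integral ux_integral_has_derivative\<close>)

lemma ux_integral_nonneg: "x \<ge> 0 \<Longrightarrow> 0 \<le> ux_integral x"
  unfolding ux_integral_def
  by (intro integral_nonneg integrable_continuous_real continuous_on_ux_time)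
    (auto intro: ux_pos[THEN less_imp_le])

lemma ux_integral_0_ge: "2 * pi / c \<le> ux_integral 0"
proof -
  have "0 \<le> ux_integral 0 - 2 * pi / c"
  proof (rule exp_coeff_nonneg[OF c_pos])
    fix x :: real assume "x \<ge> 0"
    then show "0 \<le> 2 * pi / c + (ux_integral 0 - 2 * pi / c) * exp (c * x)"
      using ux_integral_eq[of x] ux_integral_nonneg[of x] by simp
  qed
  then show ?thesis by simp
qed

lemma ux_integral_le_exp:
  assumes "x \<ge> 0" shows "ux_integral x \<le> ux_integral 0 * exp (c * x)"
proof -
  have "2 * pi / c * 1 \<le> 2 * pi / c * exp (c * x)"
    using assms c_pos by (intro mult_left_mono) auto
  then show ?thesis using ux_integral_eq[OF assms] by (simp add: algebra_simps)
qed

lemma ux_0_le: "ux 0 t \<le> 2"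
proof -
  have "\<theta> * h (u 0 t) \<le> \<bar>\<theta>\<bar> * \<bar>h (u 0 t)\<bar>"
    by (metis abs_ge_self abs_mult)
  also have "\<dots> \<le> 1"
    using theta_bound h_bound by (intro mult_le_one) auto
  finally show ?thesis by (simp add: boundary_eq)
qed

lemma ux_integral_0_le: "ux_integral 0 \<le> 2 * T"
proof -
  have "ux_integral 0 \<le> integral {0..T} (\<lambda>_. 2)"
    unfolding ux_integral_def
    by (rule integral_le) (auto intro: integrable_continuous_real continuous_on_ux_time ux_0_le)
  then show ?thesis using period_pos by simp
qed

lemma period_ge: "pi / c \<le> T"
proof -
  have "2 * (pi / c) \<le> 2 * T"
    using ux_integral_0_ge ux_integral_0_le by simp
  then show ?thesis by linarith
qed

lemma u_integral_0_le: "u_integral 0 \<le> T * u 0 0"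
proof -
  have "u_integral 0 \<le> integral {0..T} (\<lambda>_. u 0 0)"
    unfolding u_integral_def
    by (intro integral_le integrable_continuous_real continuous_on_u_time u_antimono_time) auto
  then show ?thesis using period_pos by simp
qed

lemma u_integral_ge:
  assumes "M \<ge> 0" shows "T * (u M 0 - 2 * pi) \<le> u_integral M"
proof -
  have "integral {0..T} (\<lambda>_. u M T) \<le> u_integral M"
    unfolding u_integral_def using assms
    by (intro integral_le integrable_continuous_real continuous_on_u_time u_antimono_time) auto
  then show ?thesis using rel_periodic[OF assms, of 0] period_pos by simp
qed

lemma u_at_M_le:
  assumes "M \<ge> 0" shows "u M 0 \<le> u 0 0 + 2 * pi + 2 * M * exp (c * M)"
proof -
  have "u_integral M - u_integral 0 \<le> 2 * T * exp (c * M) * (M - 0)"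
  proof (rule DERIV_le_imp_increment_le[OF assms])
    fix x assume x: "0 < x" "x < M"
    have "ux_integral x \<le> ux_integral 0 * exp (c * x)"
      using x by (intro ux_integral_le_exp) simp
    also have "\<dots> \<le> 2 * T * exp (c * M)"
      using x c_pos period_pos ux_integral_0_le ux_integral_0_ge
      by (intro mult_mono) (auto simp: less_imp_le)
    finally show "ux_integral x \<le> 2 * T * exp (c * M)" .
  qed (auto intro: u_integral_has_derivative continuous_on_subset[OF continuous_on_u_integral])
  then have "T * (u M 0 - 2 * pi) \<le> T * (u 0 0 + 2 * M * exp (c * M))"
    using u_integral_ge[OF assms] u_integral_0_le by (simp add: algebra_simps)
  then show ?thesis using period_pos by simp
qed

lemma u_bounded_on_rectangle:
  assumes "0 \<le> x" "x \<le> M" "\<bar>t\<bar> \<le> \<tau>"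
  shows "\<bar>u x t\<bar> \<le> \<bar>u 0 0\<bar> + 4 * pi + 2 * M * exp (c * M) + 2 * c * \<tau>"
proof -
  define n where "n = nat \<lceil>\<tau> / T\<rceil>"
  have "\<tau> / T \<le> real n" unfolding n_def by linarith
  then have nT: "\<tau> \<le> real n * T" using period_pos by (simp add: divide_le_eq)
  have "\<tau> \<ge> 0" using assms(3) by linarith
  then have "real n = of_int \<lceil>\<tau> / T\<rceil>" unfolding n_def using period_pos by simp
  then have "real n \<le> \<tau> / T + 1" using of_int_ceiling_le_add_one[of "\<tau> / T"] by linarith
  also have "\<tau> / T \<le> \<tau> * c / pi"
  proof -
    have "pi * \<tau> \<le> (T * c) * \<tau>"
      using period_ge c_pos \<open>\<tau> \<ge> 0\<close> by (intro mult_right_mono) (auto simp: field_simps)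
    then show ?thesis using period_pos by (simp add: field_simps)
  qed
  finally have "2 * pi * real n \<le> 2 * c * \<tau> + 2 * pi"
    by (simp add: field_simps)
  moreover have "u x t \<le> u M 0 + 2 * pi * real n"
  proof -
    have "u x t \<le> u M t" using assms by (intro u_mono_space) auto
    also have "\<dots> \<le> u M (- (real n * T))"
      using assms nT by (intro u_antimono_time) auto
    also have "\<dots> = u M 0 + 2 * pi * real n"
      using u_shift_periods[of M "- (real n * T)" n] assms by simp
    finally show ?thesis .
  qed
  moreover have "u 0 0 - 2 * pi * real n \<le> u x t"
  proof -
    have "u 0 0 - 2 * pi * real n = u 0 (real n * T)"
      using u_shift_periods[of 0 0 n] by simp
    also have "\<dots> \<le> u 0 t" using assms nT by (intro u_antimono_time) auto
    also have "\<dots> \<le> u x t" using assms by (intro u_mono_space) auto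
    finally show ?thesis .
  qed
  moreover have "u M 0 \<le> u 0 0 + 2 * pi + 2 * M * exp (c * M)"
    using assms by (intro u_at_M_le) simp
  moreover have "0 \<le> 2 * M * exp (c * M)" using assms by simp
  ultimately show ?thesis
    using abs_ge_self[of "u 0 0"] abs_ge_minus_self[of "u 0 0"] pi_gt_zero
    unfolding abs_le_iff by linarith
qed

end

lemma rel_periodic_monotone_solutionE:
  assumes "rel_periodic_monotone_solution c h \<theta> u" "0 < c" "admissible_h h" "-1 < \<theta>" "\<theta> < 1"
  obtains ux uxx ut T where "monotone_rel_periodic_solution c \<theta> h u ux uxx ut T"
proof -
  obtain ux uxx ut where sol:
    "continuous_on ({0..} \<times> UNIV) (\<lambda>(x, t). u x t)"
    "continuous_on ({0..} \<times> UNIV) (\<lambda>(x, t). ux x t)"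
    "continuous_on ({0<..} \<times> UNIV) (\<lambda>(x, t). uxx x t)"
    "\<forall>x\<ge>0. \<forall>t. ((\<lambda>s. u s t) has_real_derivative ux x t) (at x within {0..})"
    "\<forall>x>0. \<forall>t. ((\<lambda>s. ux s t) has_real_derivative uxx x t) (at x)"
    "\<forall>x>0. \<forall>t. ((\<lambda>s. u x s) has_real_derivative ut x t) (at t)"
    "\<forall>x>0. \<forall>t. ut x t = uxx x t - c * ux x t"
    "\<forall>t. ux 0 t = 1 + \<theta> * h (u 0 t)"
    "\<forall>x\<ge>0. \<forall>t. ux x t > 0" "\<forall>x>0. \<forall>t. ut x t < 0"
    "\<exists>T>0. \<forall>x\<ge>0. \<forall>t. u x (t + T) = u x t - 2 * pi"
    using assms(1) unfolding rel_periodic_monotone_solution_def by (elim exE conjE) blast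
  from sol(11) obtain T where "T > 0" "\<forall>x\<ge>0. \<forall>t. u x (t + T) = u x t - 2 * pi"
    by blast
  moreover have "\<bar>h z\<bar> \<le> 1" for z
    using assms(3) unfolding admissible_h_def by (simp add: abs_le_iff)
  ultimately show ?thesis
    by (intro that[of ux uxx ut T], unfold_locales) (use sol(1-10) assms(2,4,5) in auto)
qed

theorem lemma17:
  fixes c :: real and h :: "real \<Rightarrow> real" and y :: real
    and U :: "real \<Rightarrow> real \<Rightarrow> real \<Rightarrow> real"
  assumes "c > 0"
    and "admissible_h h"
    and "\<forall>z. -pi < z \<and> z < pi \<longrightarrow> h z > -1"
    and "-pi < y" and "y \<le> pi"
    and "\<forall>\<theta>. -1 < \<theta> \<and> \<theta> < 1 \<longrightarrow>
           rel_periodic_monotone_solution c h \<theta> (U \<theta>) \<and> U \<theta> 0 0 = y"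
  shows "\<forall>M>0. \<forall>\<tau>>0. \<exists>B. \<forall>\<theta>. -1 < \<theta> \<and> \<theta> < 1 \<longrightarrow>
           (\<forall>x t. 0 \<le> x \<and> x \<le> M \<and> -\<tau> \<le> t \<and> t \<le> \<tau> \<longrightarrow> \<bar>U \<theta> x t\<bar> \<le> B)"
proof (intro allI impI)
  fix M \<tau> :: real
  have "\<bar>U \<theta> x t\<bar> \<le> \<bar>y\<bar> + 4 * pi + 2 * M * exp (c * M) + 2 * c * \<tau>"
    if \<theta>: "-1 < \<theta> \<and> \<theta> < 1" and xt: "0 \<le> x \<and> x \<le> M \<and> -\<tau> \<le> t \<and> t \<le> \<tau>" for \<theta> x t
  proof -
    obtain ux uxx ut T where "monotone_rel_periodic_solution c \<theta> h (U \<theta>) ux uxx ut T"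
      using rel_periodic_monotone_solutionE assms(1,2,6) \<theta> by blast
    then show ?thesis
      using monotone_rel_periodic_solution.u_bounded_on_rectangle[of c \<theta> h "U \<theta>" _ _ _ _ x M t \<tau>]
        assms(6) \<theta> xt by fastforce
  qed
  then show "\<exists>B. \<forall>\<theta>. -1 < \<theta> \<and> \<theta> < 1 \<longrightarrow>
      (\<forall>x t. 0 \<le> x \<and> x \<le> M \<and> -\<tau> \<le> t \<and> t \<le> \<tau> \<longrightarrow> \<bar>U \<theta> x t\<bar> \<le> B)"
    by blast
qed

end
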